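(* Let $S$ be a finite set, let $p:2^{S}\to\mathbb{Z}\cup\{-\infty\}$ be fully supermodular with $p(\emptyset)=0$ and $p(S)$ finite, and let $B=B'(p)$. Let $f:S\to\mathbb{Z}\cup\{-\infty\}$ and $g:S\to\mathbb{Z}\cup\{+\infty\}$ with $f\le g$, let $T(f,g)=\{x\in\mathbb{R}^S: f\le x\le g\}$, and suppose $B^{\square}:=B\cap T(f,g)$ is non-empty; let $p^{\square}$ be the fully supermodular function with $B^{\square}=B'(p^{\square})$. Let $m\in B^{\square}\cap\mathbb{Z}^S$ and $u\in S$. Let $T_m(u)$ be the smallest $m$-tight set with respect to $p$ containing $u$, and $T^{\square}_m(u)$ the smallest $m$-tight set with respect to $p^{\square}$ containing $u$. Then $T^{\square}_m(u)=\{u\}$ if $m(u)=f(u)$, and $T^{\square}_m(u)=T_m(u)-\{v\in S-\{u\}: m(v)=g(v)\}$ if $m(u)>f(u)$.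
   Context: For $x\in\mathbb{R}^{S}$, $\widetilde x(Z)=\sum_{s\in Z}x(s)$. $B'(p)=\{x\in\mathbb{R}^{S}:\widetilde x(S)=p(S),\ \widetilde x(Z)\ge p(Z)\ \forall Z\subset S\}$, an integral base-polyhedron. A set $X\subseteq S$ is $m$-tight with respect to $p$ if $\widetilde m(X)=p(X)$; for fully supermodular $p$ and $m\in B'(p)$ the $m$-tight sets are closed under union and intersection, so a smallest $m$-tight set containing $u$ exists; it equals $\{s\in S: m+\chi_s-\chi_u\in B'(p)\}$, where $\chi_s$ is the unit vector of $s$. *)

theory Defs
  imports "HOL-Library.Extended_Real"
begin

definition int_or_minf :: "ereal \<Rightarrow> bool" where
  "int_or_minf e \<longleftrightarrow> e = -\<infinity> \<or> (\<exists>k::int. e = ereal (of_int k))"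

definition int_or_pinf :: "ereal \<Rightarrow> bool" where
  "int_or_pinf e \<longleftrightarrow> e = \<infinity> \<or> (\<exists>k::int. e = ereal (of_int k))"

definition fully_supermodular :: "'a set \<Rightarrow> ('a set \<Rightarrow> ereal) \<Rightarrow> bool" where
  "fully_supermodular S p \<longleftrightarrow>
     (\<forall>X. X \<subseteq> S \<longrightarrow> int_or_minf (p X)) \<and>
     (\<forall>X Y. X \<subseteq> S \<longrightarrow> Y \<subseteq> S \<longrightarrow> p X + p Y \<le> p (X \<inter> Y) + p (X \<union> Y))"

text \<open>Vectors in R^S are functions that vanish outside S.\<close>
definition vecs :: "'a set \<Rightarrow> ('a \<Rightarrow> real) set" where
  "vecs S = {x. \<forall>s. s \<notin> S \<longrightarrow> x s = 0}"

definition Bp :: "'a set \<Rightarrow> ('a set \<Rightarrow> ereal) \<Rightarrow> ('a \<Rightarrow> real) set" where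
  "Bp S p = {x \<in> vecs S. ereal (sum x S) = p S \<and>
                          (\<forall>Z. Z \<subset> S \<longrightarrow> ereal (sum x Z) \<ge> p Z)}"

definition box :: "'a set \<Rightarrow> ('a \<Rightarrow> ereal) \<Rightarrow> ('a \<Rightarrow> ereal) \<Rightarrow> ('a \<Rightarrow> real) set" where
  "box S f g = {x \<in> vecs S. \<forall>s\<in>S. f s \<le> ereal (x s) \<and> ereal (x s) \<le> g s}"

definition tight :: "('a set \<Rightarrow> ereal) \<Rightarrow> ('a \<Rightarrow> real) \<Rightarrow> 'a set \<Rightarrow> bool" where
  "tight p m X \<longleftrightarrow> ereal (sum m X) = p X"

definition smallest_tight :: "'a set \<Rightarrow> ('a set \<Rightarrow> ereal) \<Rightarrow> ('a \<Rightarrow> real) \<Rightarrow> 'a \<Rightarrow> 'a set" where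
  "smallest_tight S p m u = \<Inter>{X. X \<subseteq> S \<and> u \<in> X \<and> tight p m X}"

end

theory Submission
  imports Defs
begin

text \<open>
  For an integral base vector m and an integer-valued set function q, an element s lies in the
  smallest m-tight set containing u exactly when the exchange m + \<chi>(s) - \<chi>(u) stays in B'(q):
  if some m-tight X contains u but not s, the exchange violates the constraint of X, and
  otherwise every set losing a unit is not tight, so by integrality it has a unit of slack. Applied to q = pb, where B'(pb) = B'(p) \<inter> T(f,g),
  the exchange has to stay in the box as well, which for s \<noteq> u means m(s) < g(s) and
  m(u) > f(u).
\<close>

definition exchange :: "('a \<Rightarrow> real) \<Rightarrow> 'a \<Rightarrow> 'a \<Rightarrow> 'a \<Rightarrow> real" where
  "exchange m s u = (\<lambda>v. m v + (if v = s then 1 else 0) - (if v = u then 1 else 0))"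

lemma exchange_same [simp]: "exchange m u u = m"
  by (simp add: exchange_def)

lemma sum_exchange:
  assumes "finite Z"
  shows "sum (exchange m s u) Z = sum m Z + (if s \<in> Z then 1 else 0) - (if u \<in> Z then 1 else 0)"
  using assms by (simp add: exchange_def sum.distrib sum_subtractf)

lemma exchange_in_vecs:
  assumes "m \<in> vecs S" "s \<in> S" "u \<in> S"
  shows "exchange m s u \<in> vecs S"
  using assms by (auto simp: vecs_def exchange_def)

lemma int_or_minf_le_diff_one_iff:
  assumes "x \<in> \<int>" "int_or_minf e" "e \<le> ereal x"
  shows "e \<le> ereal (x - 1) \<longleftrightarrow> ereal x \<noteq> e"
proof -
  obtain j where "x = of_int j" using assms(1) by (auto elim: Ints_cases)
  then show ?thesis
    using assms(2,3) by (cases "e = -\<infinity>") (auto simp: int_or_minf_def)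
qed

lemma add_one_le_int_or_pinf_iff:
  assumes "x \<in> \<int>" "int_or_pinf e" "ereal x \<le> e"
  shows "ereal (x + 1) \<le> e \<longleftrightarrow> ereal x \<noteq> e"
proof -
  obtain j where "x = of_int j" using assms(1) by (auto elim: Ints_cases)
  then show ?thesis
    using assms(2,3) by (cases "e = \<infinity>") (auto simp: int_or_pinf_def)
qed

lemma smallest_tight_subset:
  assumes "m \<in> Bp S q" "u \<in> S"
  shows "smallest_tight S q m u \<subseteq> S"
  using assms unfolding smallest_tight_def by (intro Inter_lower) (simp add: Bp_def tight_def)

lemma exchange_in_Bp_if_mem_smallest_tight:
  assumes "finite S" and q_int: "\<forall>X. X \<subseteq> S \<longrightarrow> int_or_minf (q X)"
    and m: "m \<in> Bp S q" "\<forall>s\<in>S. m s \<in> \<int>" and "u \<in> S" "s \<in> S"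
    and s_mem: "s \<in> smallest_tight S q m u"
  shows "exchange m s u \<in> Bp S q"
proof -
  have "q Z \<le> ereal (sum (exchange m s u) Z)" if Z: "Z \<subset> S" for Z
  proof -
    have "finite Z" using Z \<open>finite S\<close> finite_subset by auto
    have ge: "q Z \<le> ereal (sum m Z)" using m Z by (auto simp: Bp_def)
    show ?thesis
    proof (cases "s \<notin> Z \<and> u \<in> Z")
      case True
      then have "ereal (sum m Z) \<noteq> q Z"
        using s_mem Z unfolding smallest_tight_def tight_def by auto
      moreover have "sum m Z \<in> \<int>" using m(2) Z by (intro Ints_sum) auto
      ultimately show ?thesis
        using int_or_minf_le_diff_one_iff[of "sum m Z" "q Z"] q_int Z ge True \<open>finite Z\<close>
        by (simp add: sum_exchange)
    next
      case False
      then have "sum m Z \<le> sum (exchange m s u) Z" using \<open>finite Z\<close> by (auto simp: sum_exchange)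
      then show ?thesis using ge order_trans by fastforce
    qed
  qed
  then show ?thesis
    using m assms(1,5,6) exchange_in_vecs[of m S s u] by (simp add: Bp_def sum_exchange)
qed

lemma mem_smallest_tight_if_exchange_in_Bp:
  assumes "finite S" "s \<in> S" and ex: "exchange m s u \<in> Bp S q"
  shows "s \<in> smallest_tight S q m u"
  unfolding smallest_tight_def
proof
  fix X assume X: "X \<in> {X. X \<subseteq> S \<and> u \<in> X \<and> tight q m X}"
  show "s \<in> X"
  proof (rule ccontr)
    assume "s \<notin> X"
    then have "q X \<le> ereal (sum (exchange m s u) X)" using ex X \<open>s \<in> S\<close> by (auto simp: Bp_def)
    moreover have "finite X" using X \<open>finite S\<close> finite_subset by auto
    ultimately have "ereal (sum m X) \<le> ereal (sum m X - 1)"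
      using X \<open>s \<notin> X\<close> by (simp add: sum_exchange tight_def)
    then show False by simp
  qed
qed

lemma smallest_tight_eq_exchange:
  assumes "finite S" "\<forall>X. X \<subseteq> S \<longrightarrow> int_or_minf (q X)"
    and "m \<in> Bp S q" "\<forall>s\<in>S. m s \<in> \<int>" "u \<in> S"
  shows "smallest_tight S q m u = {s \<in> S. exchange m s u \<in> Bp S q}"
  using assms smallest_tight_subset[of m S q u]
    exchange_in_Bp_if_mem_smallest_tight[of S q m u]
    mem_smallest_tight_if_exchange_in_Bp[of S _ m u q]
  by blast

lemma exchange_in_box_iff:
  assumes m: "m \<in> box S f g" "\<forall>s\<in>S. m s \<in> \<int>"
    and "\<forall>s\<in>S. int_or_minf (f s)" "\<forall>s\<in>S. int_or_pinf (g s)"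
    and "u \<in> S" "s \<in> S" "s \<noteq> u"
  shows "exchange m s u \<in> box S f g \<longleftrightarrow> ereal (m s) \<noteq> g s \<and> ereal (m u) \<noteq> f u"
proof -
  have bounds: "\<forall>v\<in>S. f v \<le> ereal (m v) \<and> ereal (m v) \<le> g v" using m(1) by (auto simp: box_def)
  have "exchange m s u \<in> box S f g \<longleftrightarrow> ereal (m s + 1) \<le> g s \<and> f u \<le> ereal (m u - 1)"
  proof
    assume "exchange m s u \<in> box S f g"
    then show "ereal (m s + 1) \<le> g s \<and> f u \<le> ereal (m u - 1)"
      using assms(5-7) unfolding box_def by (force simp: exchange_def)
  next
    assume "ereal (m s + 1) \<le> g s \<and> f u \<le> ereal (m u - 1)"
    moreover have "f s \<le> ereal (m s + 1)"
      using bounds assms(6) order_trans[of "f s" "ereal (m s)"] by force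
    moreover have "ereal (m u - 1) \<le> g u"
      using bounds assms(5) order_trans[of "ereal (m u - 1)" "ereal (m u)"] by force
    moreover have "exchange m s u \<in> vecs S"
      using m(1) assms(5,6) by (intro exchange_in_vecs) (auto simp: box_def)
    ultimately show "exchange m s u \<in> box S f g"
      using bounds assms(7) by (auto simp: box_def exchange_def)
  qed
  then show ?thesis
    using assms bounds int_or_minf_le_diff_one_iff add_one_le_int_or_pinf_iff by simp
qed

theorem claim2p9:
  fixes S :: "'a set" and p pb :: "'a set \<Rightarrow> ereal"
    and f g :: "'a \<Rightarrow> ereal" and m :: "'a \<Rightarrow> real" and u :: 'a
  assumes "finite S"
    and "fully_supermodular S p" and "p {} = 0" and "p S \<noteq> -\<infinity>"
    and "\<forall>s\<in>S. int_or_minf (f s)" and "\<forall>s\<in>S. int_or_pinf (g s)"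
    and "\<forall>s\<in>S. f s \<le> g s"
    and "Bp S p \<inter> box S f g \<noteq> {}"
    and "fully_supermodular S pb" and "pb {} = 0" and "pb S \<noteq> -\<infinity>"
    and "Bp S pb = Bp S p \<inter> box S f g"
    and "m \<in> Bp S p \<inter> box S f g" and "\<forall>s\<in>S. m s \<in> \<int>"
    and "u \<in> S"
  shows "(ereal (m u) = f u \<longrightarrow> smallest_tight S pb m u = {u}) \<and>
         (ereal (m u) > f u \<longrightarrow>
            smallest_tight S pb m u =
              smallest_tight S p m u - {v \<in> S - {u}. ereal (m v) = g v})"
proof -
  have T: "smallest_tight S p m u = {s \<in> S. exchange m s u \<in> Bp S p}"
    using assms(2,13-15) by (intro smallest_tight_eq_exchange[OF assms(1)])
      (auto simp: fully_supermodular_def)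
  have "smallest_tight S pb m u = {s \<in> S. exchange m s u \<in> Bp S p \<inter> box S f g}"
    using assms(9,12-15) smallest_tight_eq_exchange[OF assms(1), of pb m u]
    by (auto simp: fully_supermodular_def)
  also have "\<dots> = {s \<in> S. s = u \<or>
      exchange m s u \<in> Bp S p \<and> ereal (m s) \<noteq> g s \<and> ereal (m u) \<noteq> f u}"
  proof (intro Collect_cong conj_cong refl)
    fix s assume "s \<in> S"
    then show "exchange m s u \<in> Bp S p \<inter> box S f g \<longleftrightarrow> s = u \<or>
        exchange m s u \<in> Bp S p \<and> ereal (m s) \<noteq> g s \<and> ereal (m u) \<noteq> f u"
      using assms(5,6,13-15) exchange_in_box_iff[of m S f g u s] by (cases "s = u") auto
  qed
  finally show ?thesis
    using T assms(13,15) by auto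
qed

end
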